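(* Let $S \geq 1$ and, for $i = 1,\dots,S$, let $\boldsymbol{M}_i \in \mathbb{R}^{m_i \times m_i}$ be symmetric positive definite, let $\boldsymbol{K}_i \in \mathbb{R}^{m_i \times m_i}$ be symmetric positive semidefinite, and let $\boldsymbol{C}_i \in \mathbb{R}^{p \times m_i}$ be signed Boolean matrices such that the block matrix $[\boldsymbol{C}_1 \ \cdots \ \boldsymbol{C}_S]$ has full row rank $p$. Let $\Delta t > 0$ and $1/2 < \gamma \leq 1$. Suppose that sequences $\boldsymbol{d}_i^{(n)}, \boldsymbol{v}_i^{(n)} \in \mathbb{R}^{m_i}$ ($i=1,\dots,S$) and $\boldsymbol{\lambda}^{(n)} \in \mathbb{R}^p$, $n = 0,1,2,\dots$, satisfy (the $\boldsymbol{d}$-continuity domain decomposition method with zero external forcing): for all $n \geq 0$ and all $i$: $\boldsymbol{M}_i \boldsymbol{v}_i^{(n)} + \boldsymbol{K}_i \boldsymbol{d}_i^{(n)} = \boldsymbol{C}_i^{\mathrm{T}} \boldsymbol{\lambda}^{(n)}$ and $\sum_{i=1}^S \boldsymbol{C}_i \boldsymbol{d}_i^{(n)} = \boldsymbol{0}$; for all $n \geq 1$ and all $i$: $\boldsymbol{d}_i^{(n)} = \boldsymbol{d}_i^{(n-1)} + \Delta t\left((1-\gamma)\boldsymbol{v}_i^{(n-1)} + \gamma \boldsymbol{v}_i^{(n)}\right)$. Then the sequences $(\boldsymbol{d}_i^{(n)})_{n\ge0}$, $(\boldsymbol{v}_i^{(n)})_{n\ge0}$ ($i=1,\dots,S$)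 and $(\boldsymbol{\lambda}^{(n)})_{n\ge0}$ are all bounded.
   Context: A signed Boolean matrix is a matrix whose entries are in $\{-1,0,+1\}$ and each of whose rows has at most one nonzero entry. A sequence of vectors is bounded if there is a constant $C$ independent of $n$ with $\|\boldsymbol{x}^{(n)}\| < C$ for all $n$ (any norm). The equations model a first-order transient system (e.g. semi-discrete heat conduction) decomposed into $S$ subdomains coupled by Lagrange multipliers $\boldsymbol{\lambda}$, integrated in time with the generalized trapezoidal rule with parameter $\gamma$ and time step $\Delta t$. *)

theory Defs
  imports "Jordan_Normal_Form.DL_Rank"
begin

definition sym_mat :: "real mat \<Rightarrow> bool" where
  "sym_mat A \<longleftrightarrow> A = transpose_mat A"

definition pos_def_mat :: "nat \<Rightarrow> real mat \<Rightarrow> bool" where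
  "pos_def_mat k A \<longleftrightarrow> A \<in> carrier_mat k k \<and> sym_mat A \<and>
     (\<forall>x \<in> carrier_vec k. x \<noteq> 0\<^sub>v k \<longrightarrow> x \<bullet> (A *\<^sub>v x) > 0)"

definition pos_semidef_mat :: "nat \<Rightarrow> real mat \<Rightarrow> bool" where
  "pos_semidef_mat k A \<longleftrightarrow> A \<in> carrier_mat k k \<and> sym_mat A \<and>
     (\<forall>x \<in> carrier_vec k. x \<bullet> (A *\<^sub>v x) \<ge> 0)"

definition signed_boolean_mat :: "real mat \<Rightarrow> bool" where
  "signed_boolean_mat A \<longleftrightarrow>
     (\<forall>r < dim_row A. \<forall>c < dim_col A. A $$ (r, c) \<in> {-1, 0, 1}) \<and>
     (\<forall>r < dim_row A. \<forall>c1 < dim_col A. \<forall>c2 < dim_col A.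
        A $$ (r, c1) \<noteq> 0 \<longrightarrow> A $$ (r, c2) \<noteq> 0 \<longrightarrow> c1 = c2)"

definition block_row :: "nat \<Rightarrow> nat \<Rightarrow> (nat \<Rightarrow> real mat) \<Rightarrow> real mat" where
  "block_row p S C = mat_of_cols p (concat (map (\<lambda>i. cols (C i)) [0..<S]))"

definition mat_rank :: "nat \<Rightarrow> real mat \<Rightarrow> nat" where
  "mat_rank p A = vec_space.rank p A"

definition bounded_vec_seq :: "nat \<Rightarrow> (nat \<Rightarrow> real vec) \<Rightarrow> bool" where
  "bounded_vec_seq k x \<longleftrightarrow> (\<exists>B. \<forall>n. \<forall>j < k. \<bar>x n $ j\<bar> < B)"

end

theory Submission
  imports Defs
begin

text \<open>
  The discrete energy \<open>E(n) = \<Sum>\<^sub>i d\<^sub>i(n)\<^sup>T M\<^sub>i d\<^sub>i(n)\<close> does not increase: testing the equations of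
  motion at steps \<open>n\<close> and \<open>n + 1\<close> with \<open>(1 - \<gamma>) d\<^sub>i(n) + \<gamma> d\<^sub>i(n + 1)\<close> turns \<open>E(n + 1) - E(n)\<close>
  into the work of the multipliers, which vanishes by the constraint, minus a stiffness term and
  the numerical dissipation, both nonnegative for \<open>\<gamma> > 1/2\<close>. Positive definiteness of \<open>M\<^sub>i\<close> then
  bounds \<open>d\<^sub>i\<close>. The trapezoidal rule expresses \<open>\<gamma> v\<^sub>i(n + 1) + (1 - \<gamma>) v\<^sub>i(n)\<close> through bounded
  differences of \<open>d\<^sub>i\<close>; this recursion contracts by \<open>(1 - \<gamma>)/\<gamma> < 1\<close>, so \<open>v\<^sub>i\<close> is bounded.
  Finally \<open>C\<^sub>i\<^sup>T \<lambda> = M\<^sub>i v\<^sub>i + K\<^sub>i d\<^sub>i\<close> is bounded, and full row rank of \<open>[C\<^sub>1 \<dots> C\<^sub>S]\<close> bounds \<open>\<lambda>\<close>.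
\<close>

lemma scalar_prod_mult_mat_vec_double_sum:
  assumes "A \<in> carrier_mat k k" "x \<in> carrier_vec k" "y \<in> carrier_vec k"
  shows "x \<bullet> (A *\<^sub>v y) = (\<Sum>r<k. \<Sum>c<k. x $ r * A $$ (r, c) * y $ c)"
  using assms
  by (auto simp: scalar_prod_def mult_mat_vec_def row_def sum_distrib_left atLeast0LessThan ac_simps
      intro!: sum.cong)

lemma scalar_prod_mult_mat_vec_lincomb:
  fixes A :: "real mat"
  assumes A: "A \<in> carrier_mat k k" and "x \<in> carrier_vec k" "y \<in> carrier_vec k" "z \<in> carrier_vec k"
  shows "x \<bullet> (A *\<^sub>v (s \<cdot>\<^sub>v y + t \<cdot>\<^sub>v z)) = s * (x \<bullet> (A *\<^sub>v y)) + t * (x \<bullet> (A *\<^sub>v z))"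
  using assms
  by (simp add: mult_add_distrib_mat_vec[OF A] mult_mat_vec[OF A] scalar_prod_add_distrib[of _ k])

lemma scalar_prod_transpose_mult_mat_vec:
  fixes A :: "real mat"
  assumes A: "A \<in> carrier_mat p k" and x: "x \<in> carrier_vec k" and y: "y \<in> carrier_vec p"
  shows "x \<bullet> (transpose_mat A *\<^sub>v y) = y \<bullet> (A *\<^sub>v x)"
  using comm_scalar_prod[of x k "transpose_mat A *\<^sub>v y"] transpose_vec_mult_scalar[OF A x y] A x y
  by simp

lemma sym_mat_quad_form_add_smult:
  fixes A :: "real mat"
  assumes A: "A \<in> carrier_mat k k" and s: "sym_mat A"
    and a: "a \<in> carrier_vec k" and w: "w \<in> carrier_vec k"
  shows "(a + t \<cdot>\<^sub>v w) \<bullet> (A *\<^sub>v (a + t \<cdot>\<^sub>v w))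
    = a \<bullet> (A *\<^sub>v a) + 2 * t * (a \<bullet> (A *\<^sub>v w)) + t\<^sup>2 * (w \<bullet> (A *\<^sub>v w))"
proof -
  have "A $$ (c, r) = A $$ (r, c)" if "r < k" "c < k" for r c
    using s A that unfolding sym_mat_def by (metis carrier_matD index_transpose_mat(1))
  then have cross: "(\<Sum>r<k. \<Sum>c<k. w $ r * A $$ (r, c) * a $ c)
      = (\<Sum>r<k. \<Sum>c<k. a $ r * A $$ (r, c) * w $ c)"
    by (subst sum.swap) (auto intro!: sum.cong simp: ac_simps)
  have "(a + t \<cdot>\<^sub>v w) \<bullet> (A *\<^sub>v (a + t \<cdot>\<^sub>v w))
      = (\<Sum>r<k. \<Sum>c<k. (a $ r + t * w $ r) * A $$ (r, c) * (a $ c + t * w $ c))"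
    using a w by (simp add: scalar_prod_mult_mat_vec_double_sum[OF A])
  also have "\<dots> = (\<Sum>r<k. \<Sum>c<k. a $ r * A $$ (r, c) * a $ c)
      + t * (\<Sum>r<k. \<Sum>c<k. w $ r * A $$ (r, c) * a $ c)
      + t * (\<Sum>r<k. \<Sum>c<k. a $ r * A $$ (r, c) * w $ c)
      + t\<^sup>2 * (\<Sum>r<k. \<Sum>c<k. w $ r * A $$ (r, c) * w $ c)"
    by (simp add: algebra_simps sum.distrib sum_distrib_left power2_eq_square)
  finally show ?thesis
    using cross a w by (simp add: scalar_prod_mult_mat_vec_double_sum[OF A])
qed

lemma pos_def_mat_quad_nonneg:
  assumes "pos_def_mat k A" "x \<in> carrier_vec k"
  shows "x \<bullet> (A *\<^sub>v x) \<ge> 0"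
  using assms unfolding pos_def_mat_def by (cases "x = 0\<^sub>v k") auto

lemma pos_def_mat_invertible:
  assumes P: "pos_def_mat k A"
  obtains B where "B \<in> carrier_mat k k" "A * B = 1\<^sub>m k"
proof -
  have A: "A \<in> carrier_mat k k" using P unfolding pos_def_mat_def by auto
  have "det A \<noteq> 0"
  proof
    assume "det A = 0"
    then obtain y where y: "y \<in> carrier_vec k" "y \<noteq> 0\<^sub>v k" "A *\<^sub>v y = 0\<^sub>v k"
      using det_0_iff_vec_prod_zero_field[OF A] by auto
    then have "y \<bullet> (A *\<^sub>v y) > 0" using P unfolding pos_def_mat_def by auto
    with y show False by simp
  qed
  then have "A \<in> Units (ring_mat TYPE(real) k ())" by (rule det_non_zero_imp_unit[OF A])
  then show ?thesis using that unfolding Units_def ring_mat_def by auto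
qed

text \<open>
  With \<open>A u = e\<^sub>j\<close> we have \<open>x\<^sub>j = x\<^sup>T A u\<close>, and \<open>(x \<plusminus> u)\<^sup>T A (x \<plusminus> u) \<ge> 0\<close> gives
  \<open>2 \<bar>x\<^sup>T A u\<bar> \<le> x\<^sup>T A x + u\<^sup>T A u\<close>.
\<close>
lemma pos_def_mat_coord_bound:
  fixes A :: "real mat"
  assumes P: "pos_def_mat k A" and j: "j < k"
  obtains c where "\<And>x. x \<in> carrier_vec k \<Longrightarrow> \<bar>x $ j\<bar> \<le> c + x \<bullet> (A *\<^sub>v x)"
proof -
  have A: "A \<in> carrier_mat k k" and As: "sym_mat A" using P unfolding pos_def_mat_def by auto
  obtain B where B: "B \<in> carrier_mat k k" "A * B = 1\<^sub>m k" using pos_def_mat_invertible[OF P] .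
  define u where "u = B *\<^sub>v unit_vec k j"
  have u: "u \<in> carrier_vec k" unfolding u_def using B by simp
  have Au: "A *\<^sub>v u = unit_vec k j"
    unfolding u_def using assoc_mult_mat_vec[OF A B(1), of "unit_vec k j"] B by simp
  have "\<bar>x $ j\<bar> \<le> u \<bullet> (A *\<^sub>v u) + x \<bullet> (A *\<^sub>v x)" if x: "x \<in> carrier_vec k" for x
  proof -
    have xj: "x $ j = x \<bullet> (A *\<^sub>v u)" unfolding Au using j x by simp
    have "(x + t \<cdot>\<^sub>v u) \<bullet> (A *\<^sub>v (x + t \<cdot>\<^sub>v u)) \<ge> 0" for t
      by (rule pos_def_mat_quad_nonneg[OF P]) (use x u in auto)
    from this[of 1] this[of "-1"] show ?thesis
      using pos_def_mat_quad_nonneg[OF P x] pos_def_mat_quad_nonneg[OF P u]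
      unfolding xj sym_mat_quad_form_add_smult[OF A As x u] by (simp add: abs_le_iff)
  qed
  then show ?thesis by (rule that)
qed

lemma scalar_prod_mult_mat_vec_of_eq:
  fixes A B C :: "real mat"
  assumes A: "A \<in> carrier_mat k k" and B: "B \<in> carrier_mat k k" and C: "C \<in> carrier_mat p k"
    and eq: "A *\<^sub>v u + B *\<^sub>v e = transpose_mat C *\<^sub>v l"
    and u: "u \<in> carrier_vec k" and e: "e \<in> carrier_vec k" and l: "l \<in> carrier_vec p"
    and x: "x \<in> carrier_vec k"
  shows "x \<bullet> (A *\<^sub>v u) = l \<bullet> (C *\<^sub>v x) - x \<bullet> (B *\<^sub>v e)"
  using arg_cong[OF eq, of "\<lambda>z. x \<bullet> z"] scalar_prod_add_distrib[of x k "A *\<^sub>v u" "B *\<^sub>v e"]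
    scalar_prod_transpose_mult_mat_vec[OF C x l] A B u e x
  by simp

text \<open>
  One step of the generalized trapezoidal rule for \<open>M v + K d = C\<^sup>T \<lambda>\<close>: with
  \<open>w = (1 - g) v\<^sub>a + g v\<^sub>b\<close> and \<open>d\<^sub>g = (1 - g) a + g b = a + g \<Delta>t w\<close>, the energy increment is
  \<open>2 \<Delta>t d\<^sub>g\<^sup>T M w - (2g - 1) \<Delta>t\<^sup>2 w\<^sup>T M w\<close>, and \<open>M w = C\<^sup>T \<mu> - K d\<^sub>g\<close> by the equations of motion.
\<close>
lemma trapezoidal_energy_step:
  fixes Mm Km Cm :: "real mat" and a b va vb la lb :: "real vec"
  assumes M: "pos_def_mat k Mm" and K: "pos_semidef_mat k Km" and C: "Cm \<in> carrier_mat p k"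
    and a: "a \<in> carrier_vec k" and va: "va \<in> carrier_vec k" and vb: "vb \<in> carrier_vec k"
    and la: "la \<in> carrier_vec p" and lb: "lb \<in> carrier_vec p"
    and motion_a: "Mm *\<^sub>v va + Km *\<^sub>v a = transpose_mat Cm *\<^sub>v la"
    and motion_b: "Mm *\<^sub>v vb + Km *\<^sub>v b = transpose_mat Cm *\<^sub>v lb"
    and b_def: "b = a + dt \<cdot>\<^sub>v ((1 - g) \<cdot>\<^sub>v va + g \<cdot>\<^sub>v vb)"
    and dt: "dt > 0" and g: "1/2 < g"
  shows "b \<bullet> (Mm *\<^sub>v b) - a \<bullet> (Mm *\<^sub>v a)
    \<le> 2 * dt * (((1 - g) \<cdot>\<^sub>v la + g \<cdot>\<^sub>v lb) \<bullet> (Cm *\<^sub>v ((1 - g) \<cdot>\<^sub>v a + g \<cdot>\<^sub>v b)))"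
proof -
  have Mc: "Mm \<in> carrier_mat k k" and Ms: "sym_mat Mm"
    using M unfolding pos_def_mat_def by auto
  have Kc: "Km \<in> carrier_mat k k" and Kp: "\<And>x. x \<in> carrier_vec k \<Longrightarrow> x \<bullet> (Km *\<^sub>v x) \<ge> 0"
    using K unfolding pos_semidef_mat_def by auto
  define w where "w = (1 - g) \<cdot>\<^sub>v va + g \<cdot>\<^sub>v vb"
  define dg where "dg = (1 - g) \<cdot>\<^sub>v a + g \<cdot>\<^sub>v b"
  define mu where "mu = (1 - g) \<cdot>\<^sub>v la + g \<cdot>\<^sub>v lb"
  have w: "w \<in> carrier_vec k" using va vb unfolding w_def by auto
  have b: "b \<in> carrier_vec k" using a w b_def unfolding w_def by auto
  have dg: "dg \<in> carrier_vec k" using a b unfolding dg_def by auto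
  have dg_alt: "dg = 1 \<cdot>\<^sub>v a + (g * dt) \<cdot>\<^sub>v w"
    unfolding dg_def b_def w_def by (rule eq_vecI) (use a va vb in \<open>auto simp: algebra_simps\<close>)
  have increment: "b \<bullet> (Mm *\<^sub>v b) - a \<bullet> (Mm *\<^sub>v a)
      = 2 * dt * (dg \<bullet> (Mm *\<^sub>v w)) - (2 * g - 1) * dt\<^sup>2 * (w \<bullet> (Mm *\<^sub>v w))"
    using sym_mat_quad_form_add_smult[OF Mc Ms a w, of dt]
      add_scalar_prod_distrib[of "1 \<cdot>\<^sub>v a" k "(g * dt) \<cdot>\<^sub>v w" "Mm *\<^sub>v w"] a w Mc
    unfolding b_def w_def[symmetric] dg_alt by (simp add: algebra_simps power2_eq_square)
  have work: "dg \<bullet> (Mm *\<^sub>v w) = mu \<bullet> (Cm *\<^sub>v dg) - dg \<bullet> (Km *\<^sub>v dg)"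
  proof -
    note tested = scalar_prod_mult_mat_vec_of_eq[OF Mc Kc C motion_a va a la dg]
      scalar_prod_mult_mat_vec_of_eq[OF Mc Kc C motion_b vb b lb dg]
    have "dg \<bullet> (Mm *\<^sub>v w) = (1 - g) * (dg \<bullet> (Mm *\<^sub>v va)) + g * (dg \<bullet> (Mm *\<^sub>v vb))"
      unfolding w_def by (rule scalar_prod_mult_mat_vec_lincomb[OF Mc dg va vb])
    also have "\<dots> = ((1 - g) * (la \<bullet> (Cm *\<^sub>v dg)) + g * (lb \<bullet> (Cm *\<^sub>v dg)))
        - ((1 - g) * (dg \<bullet> (Km *\<^sub>v a)) + g * (dg \<bullet> (Km *\<^sub>v b)))"
      unfolding tested by (simp add: algebra_simps)
    also have "\<dots> = mu \<bullet> (Cm *\<^sub>v dg) - dg \<bullet> (Km *\<^sub>v dg)"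
      using la lb C dg scalar_prod_mult_mat_vec_lincomb[OF Kc dg a b, of "1 - g" g]
      unfolding mu_def dg_def[symmetric] by (simp add: add_scalar_prod_distrib[of _ p])
    finally show ?thesis .
  qed
  have "w \<bullet> (Mm *\<^sub>v w) \<ge> 0" by (rule pos_def_mat_quad_nonneg[OF M w])
  then have "(2 * g - 1) * dt\<^sup>2 * (w \<bullet> (Mm *\<^sub>v w)) \<ge> 0" using g by simp
  moreover have "dg \<bullet> (Km *\<^sub>v dg) \<ge> 0" by (rule Kp[OF dg])
  ultimately show ?thesis
    using increment work dt unfolding mu_def dg_def
    by (smt (verit) mult_left_mono)
qed

lemma sum_scalar_prod_eq_0:
  fixes y :: "'i \<Rightarrow> 'a::comm_ring vec"
  assumes "\<And>i. i \<in> I \<Longrightarrow> y i \<in> carrier_vec p" and "\<And>r. r < p \<Longrightarrow> (\<Sum>i\<in>I. y i $ r) = 0"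
  shows "(\<Sum>i\<in>I. u \<bullet> y i) = 0"
proof -
  have "u \<bullet> y i = (\<Sum>r<p. u $ r * y i $ r)" if "i \<in> I" for i
    using carrier_vecD[OF assms(1)[OF that]] by (simp add: scalar_prod_def atLeast0LessThan)
  then have "(\<Sum>i\<in>I. u \<bullet> y i) = (\<Sum>i\<in>I. \<Sum>r<p. u $ r * y i $ r)" by simp
  also have "\<dots> = (\<Sum>r<p. u $ r * (\<Sum>i\<in>I. y i $ r))"
    by (simp add: sum.swap[of _ I] sum_distrib_left)
  finally show ?thesis using assms(2) by simp
qed

lemma weighted_recursion_abs_bound:
  fixes x w :: "nat \<Rightarrow> real"
  assumes g: "1/2 < g" "g \<le> 1"
    and rec: "\<And>n. g * x (Suc n) + (1 - g) * x n = w n"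
    and W: "\<And>n. \<bar>w n\<bar> \<le> W"
  shows "\<bar>x n\<bar> \<le> \<bar>x 0\<bar> + W / (2 * g - 1)"
proof (induction n)
  case 0
  have "W \<ge> 0" using W[of 0] by linarith
  with g show ?case by simp
next
  case (Suc n)
  define R where "R = \<bar>x 0\<bar> + W / (2 * g - 1)"
  have "2 * g - 1 > 0" using g by simp
  then have "W = (2 * g - 1) * (R - \<bar>x 0\<bar>)" unfolding R_def by simp
  then have "W + (1 - g) * R = g * R - (2 * g - 1) * \<bar>x 0\<bar>" by (simp add: algebra_simps)
  moreover have "(2 * g - 1) * \<bar>x 0\<bar> \<ge> 0" using g by simp
  ultimately have closed: "W + (1 - g) * R \<le> g * R" by linarith
  have "g * \<bar>x (Suc n)\<bar> = \<bar>w n - (1 - g) * x n\<bar>"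
    using rec[of n] g by (simp add: abs_mult flip: rec[of n])
  also have "\<dots> \<le> \<bar>w n\<bar> + \<bar>(1 - g) * x n\<bar>" by (rule abs_triangle_ineq4)
  also have "\<bar>(1 - g) * x n\<bar> \<le> (1 - g) * R"
    using Suc g unfolding R_def by (simp add: abs_mult mult_left_mono)
  finally have "g * \<bar>x (Suc n)\<bar> \<le> W + (1 - g) * R" using W[of n] by linarith
  with closed g have "g * \<bar>x (Suc n)\<bar> \<le> g * R" by linarith
  with g show ?case unfolding R_def by simp
qed

lemma bounded_vec_seqI:
  assumes "\<And>j. j < k \<Longrightarrow> \<exists>B. \<forall>n. \<bar>x n $ j\<bar> \<le> B"
  shows "bounded_vec_seq k x"
proof -
  obtain f where f: "\<And>j n. j < k \<Longrightarrow> \<bar>x n $ j\<bar> \<le> f j" using assms by metis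
  have "\<bar>x n $ j\<bar> < (\<Sum>j<k. \<bar>f j\<bar>) + 1" if j: "j < k" for n j
  proof -
    have "\<bar>f j\<bar> \<le> (\<Sum>j<k. \<bar>f j\<bar>)" by (rule member_le_sum) (use j in auto)
    with f[OF j, of n] show ?thesis by linarith
  qed
  then show ?thesis unfolding bounded_vec_seq_def by blast
qed

lemma bounded_vec_seqE:
  assumes "bounded_vec_seq k x"
  obtains B where "\<And>n j. j < k \<Longrightarrow> \<bar>x n $ j\<bar> \<le> B"
  using assms unfolding bounded_vec_seq_def by (meson less_imp_le)

lemma bounded_vec_seq_add:
  assumes "bounded_vec_seq k x" "bounded_vec_seq k y" "\<And>n. y n \<in> carrier_vec k"
  shows "bounded_vec_seq k (\<lambda>n. x n + y n)"
proof (rule bounded_vec_seqI)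
  fix j assume j: "j < k"
  obtain Bx where Bx: "\<And>n j. j < k \<Longrightarrow> \<bar>x n $ j\<bar> \<le> Bx" using bounded_vec_seqE[OF assms(1)] by blast
  obtain By where By: "\<And>n j. j < k \<Longrightarrow> \<bar>y n $ j\<bar> \<le> By" using bounded_vec_seqE[OF assms(2)] by blast
  have "\<bar>(x n + y n) $ j\<bar> \<le> Bx + By" for n
    using Bx[OF j, of n] By[OF j, of n] j carrier_vecD[OF assms(3)] by simp
  then show "\<exists>B. \<forall>n. \<bar>(x n + y n) $ j\<bar> \<le> B" by blast
qed

lemma bounded_vec_seq_mult_mat_vec:
  fixes A :: "real mat"
  assumes A: "A \<in> carrier_mat k' k" and x: "\<And>n. x n \<in> carrier_vec k" and b: "bounded_vec_seq k x"
  shows "bounded_vec_seq k' (\<lambda>n. A *\<^sub>v x n)"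
proof (rule bounded_vec_seqI)
  fix c assume c: "c < k'"
  obtain B where B: "\<And>n j. j < k \<Longrightarrow> \<bar>x n $ j\<bar> \<le> B" using bounded_vec_seqE[OF b] by blast
  have "\<bar>(A *\<^sub>v x n) $ c\<bar> \<le> (\<Sum>q<k. \<bar>A $$ (c, q)\<bar> * B)" for n
  proof -
    have "(A *\<^sub>v x n) $ c = (\<Sum>q<k. A $$ (c, q) * x n $ q)"
      using A x[of n] c by (auto simp: scalar_prod_def row_def atLeast0LessThan intro!: sum.cong)
    also have "\<bar>\<dots>\<bar> \<le> (\<Sum>q<k. \<bar>A $$ (c, q) * x n $ q\<bar>)" by (rule sum_abs)
    also have "\<dots> \<le> (\<Sum>q<k. \<bar>A $$ (c, q)\<bar> * B)"
      by (rule sum_mono) (auto simp: abs_mult intro: mult_left_mono B)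
    finally show ?thesis .
  qed
  then show "\<exists>B. \<forall>n. \<bar>(A *\<^sub>v x n) $ c\<bar> \<le> B" by blast
qed

lemma (in vec_space) full_rank_cols_span:
  assumes A: "A \<in> carrier_mat n nc" and r: "rank A = n" and x: "x \<in> carrier_vec n"
  shows "\<exists>a U. finite U \<and> U \<subseteq> set (cols A) \<and> (\<forall>i<n. x $ i = (\<Sum>u\<in>U. a u * u $ i))"
proof -
  have "lin_indpt {}"
    by (metis empty_subsetI fin_dim finite_basis_exists subset_li_is_li vec_vs vectorspace.basis_def)
  then obtain U where U: "finite U" "maximal U (\<lambda>T. T \<subseteq> set (cols A) \<and> lin_indpt T)"
    using maximal_exists_superset[of "set (cols A)" "\<lambda>T. T \<subseteq> set (cols A) \<and> lin_indpt T" "{}"]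
    by auto
  have "card U = n" using rank_card_indpt[OF A U(2)] r by simp
  moreover have Us: "U \<subseteq> set (cols A)" "lin_indpt U" using U(2) unfolding maximal_def by auto
  moreover have Uc: "U \<subseteq> carrier V" using Us(1) cols_dim[of A] A by auto
  ultimately have "basis U" using U(1) dim_is_n by (intro dim_li_is_basis) auto
  then have "x \<in> span U" using x unfolding basis_def by auto
  then obtain a B where B: "x = lincomb a B" "finite B" "B \<subseteq> U" unfolding span_def by auto
  have "B \<subseteq> carrier_vec n" using B(3) Uc by auto
  then have "\<forall>i<n. x $ i = (\<Sum>u\<in>B. a u * u $ i)" using B(1) lincomb_index by blast
  with B(2,3) Us(1) show ?thesis by blast
qed

text \<open>Each unit vector is a fixed linear combination of columns of \<open>A\<close>.\<close>
lemma bounded_vec_seq_of_full_row_rank: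
  fixes A :: "real mat"
  assumes A: "A \<in> carrier_mat p nc" and rank: "vec_space.rank p A = p"
    and x: "\<And>n. x n \<in> carrier_vec p"
    and cols_bounded: "\<And>u. u \<in> set (cols A) \<Longrightarrow> \<exists>B. \<forall>n. \<bar>u \<bullet> x n\<bar> \<le> B"
  shows "bounded_vec_seq p x"
proof (rule bounded_vec_seqI)
  fix r assume r: "r < p"
  obtain a U where U: "finite U" "U \<subseteq> set (cols A)"
    and aU: "\<And>q. q < p \<Longrightarrow> unit_vec p r $ q = (\<Sum>u\<in>U. a u * u $ q)"
    using vec_space.full_rank_cols_span[OF A rank unit_vec_carrier[of p r]] by auto
  have "\<forall>u\<in>U. \<exists>B. \<forall>n. \<bar>u \<bullet> x n\<bar> \<le> B" using cols_bounded U(2) by blast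
  then obtain G where "\<forall>u\<in>U. \<forall>n. \<bar>u \<bullet> x n\<bar> \<le> G u" by (rule bchoice[elim_format]) blast
  then have G: "\<And>u n. u \<in> U \<Longrightarrow> \<bar>u \<bullet> x n\<bar> \<le> G u" by blast
  have "\<bar>x n $ r\<bar> \<le> (\<Sum>u\<in>U. \<bar>a u\<bar> * G u)" for n
  proof -
    have "x n $ r = (\<Sum>q<p. unit_vec p r $ q * x n $ q)"
      using scalar_prod_left_unit[OF x r] carrier_vecD[OF x] by (simp add: scalar_prod_def atLeast0LessThan)
    also have "\<dots> = (\<Sum>u\<in>U. a u * (\<Sum>q<p. u $ q * x n $ q))"
      using aU by (simp add: sum_distrib_right sum_distrib_left mult.assoc sum.swap[of _ "{..<p}"])
    also have "\<dots> = (\<Sum>u\<in>U. a u * (u \<bullet> x n))"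
      using carrier_vecD[OF x] by (simp add: scalar_prod_def atLeast0LessThan)
    finally have "\<bar>x n $ r\<bar> \<le> (\<Sum>u\<in>U. \<bar>a u * (u \<bullet> x n)\<bar>)" by (simp add: sum_abs)
    also have "\<dots> \<le> (\<Sum>u\<in>U. \<bar>a u\<bar> * G u)"
      by (rule sum_mono) (auto simp: abs_mult intro: mult_left_mono G)
    finally show ?thesis .
  qed
  then show "\<exists>B. \<forall>n. \<bar>x n $ r\<bar> \<le> B" by blast
qed

locale d_continuity_scheme =
  fixes S p :: nat and m :: "nat \<Rightarrow> nat"
    and M K C :: "nat \<Rightarrow> real mat"
    and dt \<gamma> :: real
    and d v :: "nat \<Rightarrow> nat \<Rightarrow> real vec"
    and lam :: "nat \<Rightarrow> real vec"
  assumes M_pd: "\<And>i. i < S \<Longrightarrow> pos_def_mat (m i) (M i)"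
    and K_psd: "\<And>i. i < S \<Longrightarrow> pos_semidef_mat (m i) (K i)"
    and C_dim: "\<And>i. i < S \<Longrightarrow> C i \<in> carrier_mat p (m i)"
    and C_rank: "mat_rank p (block_row p S C) = p"
    and dt_pos: "dt > 0"
    and gamma: "1/2 < \<gamma>" "\<gamma> \<le> 1"
    and d_dim: "\<And>i n. i < S \<Longrightarrow> d i n \<in> carrier_vec (m i)"
    and v_dim: "\<And>i n. i < S \<Longrightarrow> v i n \<in> carrier_vec (m i)"
    and lam_dim: "\<And>n. lam n \<in> carrier_vec p"
    and eq_motion: "\<And>i n. i < S \<Longrightarrow>
        M i *\<^sub>v v i n + K i *\<^sub>v d i n = transpose_mat (C i) *\<^sub>v lam n"
    and eq_constraint: "\<And>n r. r < p \<Longrightarrow> (\<Sum>i<S. (C i *\<^sub>v d i n) $ r) = 0"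
    and eq_trap: "\<And>i n. i < S \<Longrightarrow> n \<ge> 1 \<Longrightarrow>
        d i n = d i (n - 1) + dt \<cdot>\<^sub>v ((1 - \<gamma>) \<cdot>\<^sub>v v i (n - 1) + \<gamma> \<cdot>\<^sub>v v i n)"
begin

definition energy :: "nat \<Rightarrow> real" where
  "energy n = (\<Sum>i<S. d i n \<bullet> (M i *\<^sub>v d i n))"

lemma energy_Suc_le: "energy (Suc n) \<le> energy n"
proof -
  define mu where "mu = (1 - \<gamma>) \<cdot>\<^sub>v lam n + \<gamma> \<cdot>\<^sub>v lam (Suc n)"
  define y where "y i = C i *\<^sub>v ((1 - \<gamma>) \<cdot>\<^sub>v d i n + \<gamma> \<cdot>\<^sub>v d i (Suc n))" for i
  have step: "d i (Suc n) \<bullet> (M i *\<^sub>v d i (Suc n)) - d i n \<bullet> (M i *\<^sub>v d i n) \<le> 2 * dt * (mu \<bullet> y i)"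
    if i: "i < S" for i
    unfolding mu_def y_def
    using trapezoidal_energy_step[OF M_pd[OF i] K_psd[OF i] C_dim[OF i] d_dim[OF i] v_dim[OF i]
        v_dim[OF i] lam_dim lam_dim eq_motion[OF i] eq_motion[OF i] _ dt_pos gamma(1)]
      eq_trap[OF i, of "Suc n"]
    by simp
  have "y i $ r = (1 - \<gamma>) * (C i *\<^sub>v d i n) $ r + \<gamma> * (C i *\<^sub>v d i (Suc n)) $ r"
    if "i < S" "r < p" for i r
    using that C_dim[OF that(1)] d_dim[OF that(1)] unfolding y_def
    by (simp add: mult_add_distrib_mat_vec mult_mat_vec)
  then have "(\<Sum>i<S. y i $ r) = 0" if "r < p" for r
    using eq_constraint[OF that] that by (simp add: sum.distrib flip: sum_distrib_left)
  moreover have "y i \<in> carrier_vec p" if "i < S" for i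
    using C_dim[OF that] unfolding y_def carrier_vec_def by simp
  ultimately have "(\<Sum>i<S. mu \<bullet> y i) = 0" by (intro sum_scalar_prod_eq_0) auto
  moreover have "energy (Suc n) - energy n \<le> (\<Sum>i<S. 2 * dt * (mu \<bullet> y i))"
    unfolding energy_def sum_subtractf[symmetric] by (rule sum_mono) (use step in auto)
  ultimately show ?thesis by (simp flip: sum_distrib_left)
qed

lemma energy_le_initial: "energy n \<le> energy 0"
  by (induction n) (auto intro: order_trans[OF energy_Suc_le])

lemma d_bounded: "i < S \<Longrightarrow> bounded_vec_seq (m i) (d i)"
proof (rule bounded_vec_seqI)
  fix i j assume i: "i < S" and j: "j < m i"
  obtain c where c: "\<And>x. x \<in> carrier_vec (m i) \<Longrightarrow> \<bar>x $ j\<bar> \<le> c + x \<bullet> (M i *\<^sub>v x)"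
    using pos_def_mat_coord_bound[OF M_pd[OF i] j] by blast
  have "d i n \<bullet> (M i *\<^sub>v d i n) \<le> energy n" for n
    unfolding energy_def using i pos_def_mat_quad_nonneg[OF M_pd d_dim]
    by (intro member_le_sum) auto
  then have "\<bar>d i n $ j\<bar> \<le> c + energy 0" for n
    using c[OF d_dim[OF i]] energy_le_initial[of n] by (smt (verit))
  then show "\<exists>B. \<forall>n. \<bar>d i n $ j\<bar> \<le> B" by blast
qed

lemma v_bounded: "i < S \<Longrightarrow> bounded_vec_seq (m i) (v i)"
proof (rule bounded_vec_seqI)
  fix i j assume i: "i < S" and j: "j < m i"
  obtain D where D: "\<And>n. \<bar>d i n $ j\<bar> \<le> D" using bounded_vec_seqE[OF d_bounded[OF i]] j by metis
  define w where "w n = (d i (Suc n) $ j - d i n $ j) / dt" for n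
  have "\<gamma> * v i (Suc n) $ j + (1 - \<gamma>) * v i n $ j = w n" for n
  proof -
    have "d i (Suc n) $ j = d i n $ j + dt * ((1 - \<gamma>) * v i n $ j + \<gamma> * v i (Suc n) $ j)"
      using arg_cong[OF eq_trap[OF i, of "Suc n"], of "\<lambda>z. z $ j"] j
        carrier_vecD[OF d_dim[OF i]] carrier_vecD[OF v_dim[OF i]]
      by simp
    with dt_pos show ?thesis unfolding w_def by (simp add: field_simps)
  qed
  moreover have "\<bar>w n\<bar> \<le> 2 * D / dt" for n
  proof -
    have "\<bar>d i (Suc n) $ j - d i n $ j\<bar> \<le> 2 * D" using D[of n] D[of "Suc n"] by linarith
    with dt_pos show ?thesis unfolding w_def by (simp add: abs_divide divide_right_mono)
  qed
  ultimately show "\<exists>B. \<forall>n. \<bar>v i n $ j\<bar> \<le> B"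
    using weighted_recursion_abs_bound[OF gamma, of "\<lambda>n. v i n $ j" w "2 * D / dt"] by blast
qed

lemma lam_bounded: "bounded_vec_seq p lam"
proof -
  define L where "L = concat (map (\<lambda>i. cols (C i)) [0..<S])"
  have L: "set L \<subseteq> carrier_vec p"
  proof
    fix u assume "u \<in> set L"
    then obtain i where i: "i < S" and u: "u \<in> set (cols (C i))" unfolding L_def by auto
    show "u \<in> carrier_vec p" using cols_dim[of "C i"] u carrier_matD(1)[OF C_dim[OF i]] by auto
  qed
  have B: "block_row p S C \<in> carrier_mat p (length L)" and cols_B: "cols (block_row p S C) = L"
    using L unfolding block_row_def L_def[symmetric] by auto
  have "\<exists>B. \<forall>n. \<bar>col (C i) c \<bullet> lam n\<bar> \<le> B" if i: "i < S" and c: "c < m i" for i c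
  proof -
    have "bounded_vec_seq (m i) (\<lambda>n. M i *\<^sub>v v i n + K i *\<^sub>v d i n)"
      using M_pd[OF i] K_psd[OF i] v_dim[OF i] d_dim[OF i] v_bounded[OF i] d_bounded[OF i]
      unfolding pos_def_mat_def pos_semidef_mat_def
      by (intro bounded_vec_seq_add bounded_vec_seq_mult_mat_vec) auto
    then obtain B where B: "\<And>n j. j < m i \<Longrightarrow> \<bar>(M i *\<^sub>v v i n + K i *\<^sub>v d i n) $ j\<bar> \<le> B"
      using bounded_vec_seqE by blast
    have "col (C i) c \<bullet> lam n = (M i *\<^sub>v v i n + K i *\<^sub>v d i n) $ c" for n
      unfolding eq_motion[OF i] using C_dim[OF i] c by simp
    with B[OF c] show ?thesis by metis
  qed
  moreover have "\<exists>i c. i < S \<and> c < m i \<and> u = col (C i) c" if "u \<in> set L" for u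
    using that C_dim unfolding L_def cols_def by fastforce
  ultimately have "\<exists>B. \<forall>n. \<bar>u \<bullet> lam n\<bar> \<le> B" if "u \<in> set L" for u
    using that by blast
  then show ?thesis
    using bounded_vec_seq_of_full_row_rank[OF B C_rank[unfolded mat_rank_def], of lam] lam_dim
    unfolding cols_B by blast
qed

end

theorem mainTheorem2:
  fixes S p :: nat and m :: "nat \<Rightarrow> nat"
    and M K C :: "nat \<Rightarrow> real mat"
    and dt \<gamma> :: real
    and d v :: "nat \<Rightarrow> nat \<Rightarrow> real vec"
    and lam :: "nat \<Rightarrow> real vec"
  assumes S_pos: "S \<ge> 1"
    and M_pd: "\<And>i. i < S \<Longrightarrow> pos_def_mat (m i) (M i)"
    and K_psd: "\<And>i. i < S \<Longrightarrow> pos_semidef_mat (m i) (K i)"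
    and C_dim: "\<And>i. i < S \<Longrightarrow> C i \<in> carrier_mat p (m i)"
    and C_sb: "\<And>i. i < S \<Longrightarrow> signed_boolean_mat (C i)"
    and C_rank: "mat_rank p (block_row p S C) = p"
    and dt_pos: "dt > 0"
    and gamma: "1/2 < \<gamma>" "\<gamma> \<le> 1"
    and d_dim: "\<And>i n. i < S \<Longrightarrow> d i n \<in> carrier_vec (m i)"
    and v_dim: "\<And>i n. i < S \<Longrightarrow> v i n \<in> carrier_vec (m i)"
    and lam_dim: "\<And>n. lam n \<in> carrier_vec p"
    and eq_motion: "\<And>i n. i < S \<Longrightarrow>
        M i *\<^sub>v v i n + K i *\<^sub>v d i n = transpose_mat (C i) *\<^sub>v lam n"
    and eq_constraint: "\<And>n r. r < p \<Longrightarrow> (\<Sum>i<S. (C i *\<^sub>v d i n) $ r) = 0"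
    and eq_trap: "\<And>i n. i < S \<Longrightarrow> n \<ge> 1 \<Longrightarrow>
        d i n = d i (n - 1) + dt \<cdot>\<^sub>v ((1 - \<gamma>) \<cdot>\<^sub>v v i (n - 1) + \<gamma> \<cdot>\<^sub>v v i n)"
  shows "(\<forall>i < S. bounded_vec_seq (m i) (d i) \<and> bounded_vec_seq (m i) (v i))
         \<and> bounded_vec_seq p lam"
proof -
  interpret d_continuity_scheme S p m M K C dt \<gamma> d v lam
    using M_pd K_psd C_dim C_rank dt_pos gamma d_dim v_dim lam_dim eq_motion eq_constraint eq_trap
    by unfold_locales
  show ?thesis using d_bounded v_bounded lam_bounded by blast
qed

end
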